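(* Let $T\subset\mathbb{Z}_p$ be a finite set with at least two elements, let $\mu_T=\sum_{t\in T}\delta_t$, and let $\gamma_T=\max_{t,t'\in T,\,t\neq t'}\{-\log_p|t-t'|_p\}$. Then $\widehat{\mu_T}(\xi)\neq 0$ for every $\xi\in\mathbb{Q}_p$ with $\xi\notin B(0,p^{\gamma_T+1})$, i.e. with $|\xi|_p>p^{\gamma_T+1}$.
   Context: $\mathbb{Q}_p$ is the field of $p$-adic numbers ($p$ prime) with absolute value $|\cdot|_p$ and $\mathbb{Z}_p$ its ring of integers; $B(0,p^n)=p^{-n}\mathbb{Z}_p=\{x:|x|_p\le p^n\}$. $\delta_t$ is the Dirac measure at $t$. For $x=\sum_{n\ge v}a_np^n$ ($a_n\in\{0,\dots,p-1\}$) its fractional part is $\{x\}=\sum_{n=v}^{-1}a_np^n$; $\chi(x)=e^{2\pi i\{x\}}$, $\chi_y(x)=\chi(yx)$. The Fourier transform of a finite Borel measure $\mu$ is $\widehat\mu(y)=\int\overline{\chi_y(x)}\,d\mu(x)$, so $\widehat{\mu_T}(\xi)=\sum_{t\in T}e^{-2\pi i\{t\xi\}}$. *)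

theory Defs
  imports Complex_Main "HOL-Computational_Algebra.Primes"
begin

text \<open>p-adic integers as the inverse limit of Z/p^n Z: an element x of Z_p is the
compatible sequence of its residues x n \<in> {0..<p^n} (x n = x mod p^n).\<close>
definition Zp :: "nat \<Rightarrow> (nat \<Rightarrow> int) set" where
  "Zp p = {x. \<forall>n. 0 \<le> x n \<and> x n < int p ^ n \<and> x (Suc n) mod (int p ^ n) = x n}"

definition zp_mult :: "nat \<Rightarrow> (nat \<Rightarrow> int) \<Rightarrow> (nat \<Rightarrow> int) \<Rightarrow> (nat \<Rightarrow> int)" where
  "zp_mult p x y = (\<lambda>n. (x n * y n) mod (int p ^ n))"

definition zp_diff :: "nat \<Rightarrow> (nat \<Rightarrow> int) \<Rightarrow> (nat \<Rightarrow> int) \<Rightarrow> (nat \<Rightarrow> int)" where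
  "zp_diff p x y = (\<lambda>n. (x n - y n) mod (int p ^ n))"

text \<open>p-adic valuation of a nonzero element of Z_p: the largest n with p^n dividing x,
 i.e. the least n with x mod p^(n+1) \<noteq> 0.\<close>
definition zp_val :: "nat \<Rightarrow> (nat \<Rightarrow> int) \<Rightarrow> nat" where
  "zp_val p x = (LEAST n. x (Suc n) \<noteq> 0)"

text \<open>Q_p = Z_p[1/p]: a pair (k, w) with w \<in> Z_p represents the p-adic number p^(-k) * w.
 Every element of Q_p has such representations.\<close>
definition Qp :: "nat \<Rightarrow> (nat \<times> (nat \<Rightarrow> int)) set" where
  "Qp p = {(k, w). w \<in> Zp p}"

definition qp_abs :: "nat \<Rightarrow> nat \<times> (nat \<Rightarrow> int) \<Rightarrow> real" where
  "qp_abs p \<xi> = (case \<xi> of (k, w) \<Rightarrow>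
      if w = (\<lambda>_. 0) then 0 else real p powr (real k - real (zp_val p w)))"

definition qp_frac :: "nat \<Rightarrow> nat \<times> (nat \<Rightarrow> int) \<Rightarrow> real" where
  "qp_frac p \<xi> = (case \<xi> of (k, w) \<Rightarrow> real_of_int (w k) / real p ^ k)"

definition zp_qp_mult :: "nat \<Rightarrow> (nat \<Rightarrow> int) \<Rightarrow> nat \<times> (nat \<Rightarrow> int) \<Rightarrow> nat \<times> (nat \<Rightarrow> int)" where
  "zp_qp_mult p t \<xi> = (case \<xi> of (k, w) \<Rightarrow> (k, zp_mult p t w))"

definition padic_chi :: "nat \<Rightarrow> nat \<times> (nat \<Rightarrow> int) \<Rightarrow> complex" where
  "padic_chi p \<xi> = exp (2 * of_real pi * \<i> * of_real (qp_frac p \<xi>))"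

definition fourier_muT :: "nat \<Rightarrow> (nat \<Rightarrow> int) set \<Rightarrow> nat \<times> (nat \<Rightarrow> int) \<Rightarrow> complex" where
  "fourier_muT p T \<xi> = (\<Sum>t\<in>T. cnj (padic_chi p (zp_qp_mult p t \<xi>)))"

definition gammaT :: "nat \<Rightarrow> (nat \<Rightarrow> int) set \<Rightarrow> nat" where
  "gammaT p T = Max {zp_val p (zp_diff p t t') | t t'. t \<in> T \<and> t' \<in> T \<and> t \<noteq> t'}"

end

theory Submission
  imports Defs "Berlekamp_Zassenhaus.Factor_Bound" "HOL-Analysis.Analysis"
begin

text \<open>Write xi = p^(-k) w with w in Z_p of valuation v, so w = p^v u with u a unit. Then
  hat mu_T(xi) is the complex conjugate of the sum over t in T of zeta^(a(t)), where zeta is a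
  primitive p^k-th root of unity and a(t) = t w mod p^k. The residue of a(t) modulo p^(k-1)
  determines t modulo p^(k-1-v), and the hypothesis on |xi|_p says k - 1 - v > gamma_T, so the
  a(t) are pairwise incongruent modulo p^(k-1).

  The cyclotomic polynomial Phi(x) = sum_{j<p} x^(j p^(k-1)) is irreducible over Q, by
  Eisenstein's criterion applied to Phi(x + 1). Hence if the sum of zeta^a over a set A vanishes,
  Phi divides g(x) = sum_{a in A} x^a. For A contained in [0, p^k) the quotient has degree below
  p^(k-1), which makes the 0/1 coefficients of g periodic with period p^(k-1) on [0, p^k): any
  a in A drags a second element of its residue class modulo p^(k-1) into A.\<close>

section \<open>Frobenius and Eisenstein\<close>

lemma prime_dvd_add_power_minus_powers:
  fixes x y :: "'a::comm_ring_1"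
  assumes "prime p"
  shows "of_nat p dvd (x + y) ^ p - x ^ p - y ^ p"
proof -
  have p1: "p > 1" using assms prime_gt_1_nat by blast
  have "{..p} = insert p (insert 0 {1..<p})" using p1 by auto
  then have "(x + y) ^ p - x ^ p - y ^ p = (\<Sum>k\<in>{1..<p}. of_nat (p choose k) * x ^ k * y ^ (p - k))"
    using p1 by (simp add: binomial_ring)
  also have "of_nat p dvd \<dots>"
  proof (rule dvd_sum)
    fix k assume "k \<in> {1..<p}"
    then have "p dvd p choose k" using dvd_choose_prime assms by simp
    then obtain m where m: "p choose k = p * m" ..
    show "of_nat p dvd of_nat (p choose k) * x ^ k * y ^ (p - k)"
      unfolding m of_nat_mult mult.assoc by (rule dvd_triv_left)
  qed
  finally show ?thesis .
qed

lemma prime_dvd_add_power_prime_power_minus_powers: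
  fixes x y :: "'a::comm_ring_1"
  assumes "prime p"
  shows "of_nat p dvd (x + y) ^ p ^ j - x ^ p ^ j - y ^ p ^ j"
proof (induction j)
  case 0
  show ?case by simp
next
  case (Suc j)
  let ?a = "x ^ p ^ j + y ^ p ^ j"
  from Suc.IH obtain w where "(x + y) ^ p ^ j - x ^ p ^ j - y ^ p ^ j = of_nat p * w" ..
  then have w: "(x + y) ^ p ^ j = ?a + of_nat p * w"
    by (simp add: algebra_simps)
  have "(x + y) ^ p ^ Suc j = (?a + of_nat p * w) ^ p"
    by (simp only: w power_Suc2 power_mult)
  then have "(x + y) ^ p ^ Suc j - x ^ p ^ Suc j - y ^ p ^ Suc j
      = ((?a + of_nat p * w) ^ p - ?a ^ p - (of_nat p * w) ^ p)
        + (?a ^ p - x ^ p ^ Suc j - y ^ p ^ Suc j) + (of_nat p * w) ^ p"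
    by (simp add: algebra_simps)
  also have "of_nat p dvd \<dots>"
  proof (intro dvd_add)
    show "of_nat p dvd (?a + of_nat p * w) ^ p - ?a ^ p - (of_nat p * w) ^ p"
      by (rule prime_dvd_add_power_minus_powers[OF assms])
    show "of_nat p dvd ?a ^ p - x ^ p ^ Suc j - y ^ p ^ Suc j"
      using prime_dvd_add_power_minus_powers[OF assms, of "x ^ p ^ j" "y ^ p ^ j"]
      by (simp only: power_Suc2 power_mult)
    show "of_nat p dvd (of_nat p * w) ^ p"
      using assms prime_gt_0_nat by (simp add: power_mult_distrib)
  qed
  finally show ?case .
qed

lemma eisenstein_factor_degree_0:
  fixes A B :: "'a::idom poly"
  assumes q: "prime_elem q"
    and low: "\<And>i. i < degree (A * B) \<Longrightarrow> q dvd coeff (A * B) i"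
    and lead: "\<not> q dvd lead_coeff (A * B)"
    and B0: "\<not> q dvd coeff B 0"
  shows "degree B = 0"
proof (rule ccontr)
  assume dB: "degree B \<noteq> 0"
  have "A \<noteq> 0" "B \<noteq> 0" using lead by auto
  then have deg: "degree (A * B) = degree A + degree B" by (rule degree_mult_eq)
  have nlA: "\<not> q dvd lead_coeff A" using lead by (metis dvd_mult2 lead_coeff_mult)
  define k where "k = (LEAST i. \<not> q dvd coeff A i)"
  have k: "\<not> q dvd coeff A k" unfolding k_def by (rule LeastI[of _ "degree A"]) (rule nlA)
  have below_k: "q dvd coeff A i" if "i < k" for i using that not_less_Least unfolding k_def by blast
  have "k \<le> degree A" unfolding k_def by (rule Least_le) (rule nlA)
  then have "q dvd coeff (A * B) k" using low deg dB by simp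
  moreover have "q dvd (\<Sum>i<k. coeff A i * coeff B (k - i))"
    by (intro dvd_sum dvd_mult2 below_k) simp
  ultimately have "q dvd coeff (A * B) k - (\<Sum>i<k. coeff A i * coeff B (k - i))"
    by (rule dvd_diff)
  also have "coeff (A * B) k - (\<Sum>i<k. coeff A i * coeff B (k - i)) = coeff A k * coeff B 0"
    by (simp add: coeff_mult lessThan_Suc_atMost[symmetric])
  finally show False using k B0 prime_elem_dvd_multD[OF q] by blast
qed

lemma eisenstein_criterion:
  fixes A B :: "'a::idom poly"
  assumes q: "prime_elem q"
    and low: "\<And>i. i < degree (A * B) \<Longrightarrow> q dvd coeff (A * B) i"
    and lead: "\<not> q dvd lead_coeff (A * B)"
    and const: "\<not> q ^ 2 dvd coeff (A * B) 0"
  shows "degree A = 0 \<or> degree B = 0"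
proof (cases "degree (A * B) = 0")
  case True
  moreover have "A \<noteq> 0" "B \<noteq> 0" using lead by auto
  ultimately show ?thesis by (simp add: degree_mult_eq)
next
  case False
  then have "q dvd coeff A 0 * coeff B 0" using low[of 0] by (simp add: coeff_mult_0)
  moreover have "\<not> (q dvd coeff A 0 \<and> q dvd coeff B 0)"
    using const mult_dvd_mono[of q "coeff A 0" q "coeff B 0"] by (auto simp: coeff_mult_0 power2_eq_square)
  ultimately consider "q dvd coeff A 0" "\<not> q dvd coeff B 0" | "q dvd coeff B 0" "\<not> q dvd coeff A 0"
    using prime_elem_dvd_mult_iff[OF q] by blast
  then show ?thesis
  proof cases
    case 1
    then show ?thesis using eisenstein_factor_degree_0[OF q low lead] by simp
  next
    case 2
    then show ?thesis using eisenstein_factor_degree_0[OF q, of B A] low lead by (simp add: mult.commute)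
  qed
qed

section \<open>Cyclotomic polynomials of prime-power order\<close>

(* 1 + x^N + ... + x^((m-1)N); for m = p prime and N = p^n it is the cyclotomic polynomial of
   order p^(n+1). *)
definition geom_poly :: "nat \<Rightarrow> nat \<Rightarrow> 'a::comm_ring_1 poly" where
  "geom_poly m N = (\<Sum>j<m. monom 1 N ^ j)"

lemma geom_poly_mult: "geom_poly m N * (monom 1 N - 1) = monom 1 (m * N) - 1"
proof -
  have "monom 1 N ^ m - 1 = (monom 1 N - 1) * geom_poly m N"
    unfolding geom_poly_def by (rule power_diff_1_eq)
  moreover have "monom (1::'a) N ^ m = monom 1 (m * N)" by (simp add: monom_power mult.commute)
  ultimately show ?thesis by (metis mult.commute)
qed

lemma degree_monom_1_minus_1:
  assumes "N > 0"
  shows "degree (monom (1::'a::idom) N - 1) = N"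
proof -
  have "monom (1::'a) N - 1 = monom 1 N + [:-1:]" by (simp add: monom_0 flip: pCons_one)
  also have "degree \<dots> = N" using assms by (subst degree_add_eq_left) (simp_all add: degree_monom_eq)
  finally show ?thesis .
qed

lemma geom_poly_nonzero:
  assumes "m > 0" and "N > 0"
  shows "geom_poly m N \<noteq> (0::'a::idom poly)"
proof
  assume "geom_poly m N = (0::'a poly)"
  then have "monom (1::'a) (m * N) - 1 = 0" using geom_poly_mult[of m N] by (metis mult_zero_left)
  then show False using degree_monom_1_minus_1[of "m * N", where 'a='a] assms by simp
qed

lemma degree_geom_poly:
  assumes "m > 0" and "N > 0"
  shows "degree (geom_poly m N :: 'a::idom poly) = (m - 1) * N"
proof -
  have "monom (1::'a) N - 1 \<noteq> 0"
    using degree_monom_1_minus_1[OF assms(2), where 'a='a] assms(2) by auto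
  then have "degree (geom_poly m N * (monom (1::'a) N - 1))
      = degree (geom_poly m N :: 'a poly) + degree (monom (1::'a) N - 1)"
    by (rule degree_mult_eq[OF geom_poly_nonzero[OF assms]])
  then show ?thesis
    using assms by (simp add: geom_poly_mult degree_monom_1_minus_1 diff_mult_distrib)
qed

lemma poly_geom_poly_1: "poly (geom_poly m N) (1::'a::comm_ring_1) = of_nat m"
  by (simp add: geom_poly_def poly_sum poly_monom)

lemma pcompose_monom_1: "pcompose (monom (1::'a::comm_ring_1) N) q = q ^ N"
proof (induction N)
  case 0
  show ?case by (simp only: monom_0 one_pCons[symmetric] pcompose_1 power_0)
next
  case (Suc N)
  then show ?case by (simp only: monom_Suc pcompose_pCons pCons_0_0 add_0_left power_Suc)
qed

lemma map_poly_geom_poly: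
  assumes "comm_ring_hom h"
  shows "map_poly h (geom_poly m N) = geom_poly m N"
proof -
  interpret comm_ring_hom h by (rule assms)
  interpret mh: map_poly_comm_ring_hom h ..
  show ?thesis by (simp add: geom_poly_def hom_distribs)
qed

lemma shifted_geom_poly_coeff_mod_prime:
  fixes p n :: nat
  assumes p: "prime p"
  defines "\<Psi> \<equiv> pcompose (geom_poly p (p ^ n) :: int poly) [:1, 1:]"
  shows "int p dvd coeff \<Psi> i - (if i = (p - 1) * p ^ n then 1 else 0)"
proof -
  define N where "N = p ^ n"
  define E where "E = ([:1, 1:] :: int poly) ^ N"
  have p1: "p > 1" using p prime_gt_1_nat by blast
  have X1: "[:1, 1:] = monom (1::int) 1 + 1"
    by (simp add: poly_eq_iff coeff_monom coeff_pCons split: nat.split)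
  have "\<Psi> = (\<Sum>j<p. E ^ j)"
    unfolding \<Psi>_def E_def N_def geom_poly_def
    by (simp only: pcompose_sum monom_power power_one pcompose_monom_1 power_mult)
  then have \<Psi>_mult: "\<Psi> * (E - 1) = E ^ p - 1"
    by (simp only: power_diff_1_eq mult.commute)
  have E: "of_nat p dvd E - monom 1 N - 1"
    using prime_dvd_add_power_prime_power_minus_powers[OF p, of "monom (1::int) 1" 1 n]
    unfolding E_def N_def X1 by (simp only: monom_power power_one mult_1)
  have "E ^ p = [:1, 1:] ^ p ^ Suc n"
    unfolding E_def N_def by (simp only: power_mult[symmetric] power_Suc2)
  then have Ep: "of_nat p dvd E ^ p - monom 1 (p * N) - 1"
    using prime_dvd_add_power_prime_power_minus_powers[OF p, of "monom (1::int) 1" 1 "Suc n"]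
    unfolding N_def X1 by (simp only: monom_power power_one mult_1 power_Suc)
  \<comment> \<open>modulo p: x^N \<Psi> \<equiv> (E - 1) \<Psi> = E^p - 1 \<equiv> x^(pN)\<close>
  have "monom 1 N * \<Psi> - monom 1 (p * N)
      = - (\<Psi> * (E - monom 1 N - 1)) + (E ^ p - monom 1 (p * N) - 1)"
    using \<Psi>_mult by (simp add: algebra_simps)
  also have "of_nat p dvd \<dots>"
    using E Ep by (intro dvd_add dvd_minus_iff[THEN iffD2] dvd_mult)
  finally have "[:int p:] dvd monom 1 N * \<Psi> - monom 1 (p * N)"
    by (simp only: of_nat_poly)
  then have "int p dvd coeff (monom 1 N * \<Psi> - monom 1 (p * N)) (i + N)"
    by (simp only: const_poly_dvd_iff)
  moreover have "coeff (monom 1 N * \<Psi> - monom 1 (p * N)) (i + N)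
      = coeff \<Psi> i - (if i = (p - 1) * N then 1 else 0)"
    using p1 by (auto simp: coeff_monom_mult coeff_monom diff_mult_distrib)
  ultimately show ?thesis
    by (simp only: N_def)
qed

lemma shifted_geom_poly_factor_degree_0:
  fixes A B :: "int poly"
  assumes p: "prime p" and AB: "pcompose (geom_poly p (p ^ n)) [:1, 1:] = A * B"
  shows "degree A = 0 \<or> degree B = 0"
proof (rule eisenstein_criterion)
  have p1: "p > 1" using p prime_gt_1_nat by blast
  have deg: "degree (A * B) = (p - 1) * p ^ n"
    unfolding AB[symmetric] using p1 by (simp add: degree_pcompose degree_geom_poly)
  have cong: "int p dvd coeff (A * B) i - (if i = (p - 1) * p ^ n then 1 else 0)" for i
    using shifted_geom_poly_coeff_mod_prime[OF p, of n i] by (simp only: AB)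
  show "prime_elem (int p)" using p by simp
  show "int p dvd coeff (A * B) i" if "i < degree (A * B)" for i
    using cong[of i] that deg by simp
  show "\<not> int p dvd lead_coeff (A * B)"
  proof
    assume "int p dvd lead_coeff (A * B)"
    then have "int p dvd 1" using cong[of "degree (A * B)"] deg by (simp add: dvd_diff_right_iff)
    then show False using p1 by simp
  qed
  have "coeff (A * B) 0 = int p"
    unfolding AB[symmetric] by (simp add: poly_0_coeff_0[symmetric] poly_pcompose poly_geom_poly_1)
  then show "\<not> int p ^ 2 dvd coeff (A * B) 0"
    using p1 by (auto simp: power2_eq_square dest: dvd_imp_le_int)
qed

lemma irreducible_geom_poly_prime_power:
  assumes p: "prime p"
  shows "irreducible (geom_poly p (p ^ n) :: rat poly)"
proof (rule irreducibleI)
  have "p > 1" using p prime_gt_1_nat by blast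
  then have "geom_poly p (p ^ n) \<noteq> (0 :: rat poly)" and "degree (geom_poly p (p ^ n) :: rat poly) > 0"
    by (simp_all add: geom_poly_nonzero degree_geom_poly)
  then show "geom_poly p (p ^ n) \<noteq> (0 :: rat poly)" and "\<not> is_unit (geom_poly p (p ^ n) :: rat poly)"
    by (simp_all add: is_unit_iff_degree)
  fix a b :: "rat poly"
  assume ab: "geom_poly p (p ^ n) = a * b"
  then have "of_int_poly (geom_poly p (p ^ n)) = a * b"
    by (simp add: map_poly_geom_poly of_int_hom.comm_ring_hom_axioms)
  from rat_to_int_factor[OF this] obtain A B :: "int poly"
    where AB: "geom_poly p (p ^ n) = A * B" "degree A = degree a" "degree B = degree b"
    by blast
  have "degree (pcompose A [:1, 1:]) = 0 \<or> degree (pcompose B [:1, 1:]) = 0"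
    by (rule shifted_geom_poly_factor_degree_0[OF p, of n]) (simp add: AB(1) pcompose_mult)
  then have "degree a = 0 \<or> degree b = 0"
    using AB(2,3) by (simp add: degree_pcompose)
  then show "is_unit a \<or> is_unit b"
    using ab \<open>geom_poly p (p ^ n) \<noteq> 0\<close> by (auto simp: is_unit_iff_degree)
qed

section \<open>Vanishing sums of roots of unity\<close>

lemma poly_geom_poly_eq_0:
  fixes z :: "'a::idom"
  assumes "z ^ (m * N) = 1" and "z ^ N \<noteq> 1"
  shows "poly (geom_poly m N) z = 0"
proof -
  have "poly (geom_poly m N) z * (z ^ N - 1) = z ^ (m * N) - 1"
    using arg_cong[OF geom_poly_mult[of m N], of "\<lambda>P. poly P z"] by (simp add: poly_monom)
  then show ?thesis using assms by simp
qed

lemma coeff_periodic_if_geom_poly_dvd: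
  fixes g :: "'a::idom poly"
  assumes "geom_poly m N dvd g" and "degree g < m * N"
    and "0 < N" and "N \<le> k" and "k < m * N"
  shows "coeff g (k - N) = coeff g k"
proof -
  obtain q where g: "g = geom_poly m N * q" using assms(1) ..
  have "m > 0" using assms(4,5) by (cases m) auto
  have "degree q < N"
  proof (cases "q = 0")
    case False
    then have "degree g = (m - 1) * N + degree q"
      using degree_mult_eq[OF geom_poly_nonzero[OF \<open>m > 0\<close> assms(3)] False]
        degree_geom_poly[OF \<open>m > 0\<close> assms(3), where 'a='a] g
      by simp
    then show ?thesis using assms(2) \<open>m > 0\<close> by (simp add: diff_mult_distrib)
  qed (use assms(3) in simp)
  have "(monom 1 N - 1) * g = (monom 1 (m * N) - 1) * q"
    unfolding g by (simp add: geom_poly_mult mult.commute mult.left_commute)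
  then have "coeff (monom 1 N * g - g) k = coeff (monom 1 (m * N) * q - q) k"
    by (simp only: left_diff_distrib mult_1)
  moreover have "coeff q k = 0" using \<open>degree q < N\<close> assms(4) by (simp add: coeff_eq_0)
  ultimately show ?thesis
    using assms(4,5) by (simp add: coeff_monom_mult)
qed

lemma irreducible_dvd_if_common_root:
  fixes P Q :: "'a::field_gcd poly" and h :: "'a \<Rightarrow> 'b::field"
  assumes "field_hom h" and "irreducible P"
    and "poly (map_poly h P) z = 0" and "poly (map_poly h Q) z = 0"
  shows "P dvd Q"
proof (rule ccontr)
  interpret field_hom h by (rule assms(1))
  interpret mh: map_poly_comm_ring_hom h ..
  assume "\<not> P dvd Q"
  then have "gcd P Q = 1"
    by (intro coprime_imp_gcd_eq_1 prime_elem_imp_coprime irreducible_imp_prime_elem assms(2))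
  then obtain a b where bezout: "a * P + b * Q = 1"
    by (metis bezout_coefficients_fst_snd)
  have "poly (map_poly h (a * P + b * Q)) z = 1"
    by (simp only: bezout mh.hom_one poly_1)
  moreover have "poly (map_poly h (a * P + b * Q)) z = 0"
    using assms(3,4) by (simp only: mh.hom_add mh.hom_mult poly_add poly_mult mult_zero_right add_0)
  ultimately show False by simp
qed

lemma sum_powers_prime_power_root_nonzero:
  fixes A :: "nat set" and z :: "'a::field_char_0"
  assumes p: "prime p" and N: "N = p ^ n"
    and A: "finite A" "A \<noteq> {}" "A \<subseteq> {..<p * N}"
    and residues: "inj_on (\<lambda>a. a mod N) A"
    and z: "z ^ (p * N) = 1" "z ^ N \<noteq> 1"
  shows "(\<Sum>a\<in>A. z ^ a) \<noteq> 0"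
proof
  assume sum: "(\<Sum>a\<in>A. z ^ a) = 0"
  interpret mh: map_poly_comm_ring_hom "of_rat :: rat \<Rightarrow> 'a" ..
  have "p > 1" using p prime_gt_1_nat by blast
  have "N > 0" unfolding N using \<open>p > 1\<close> by simp
  define g :: "rat poly" where "g = (\<Sum>a\<in>A. monom 1 a)"
  have coeff_g: "coeff g k = (if k \<in> A then 1 else 0)" for k
    unfolding g_def coeff_sum coeff_monom using A(1) by (simp add: sum.delta)
  have "degree g < p * N"
  proof -
    have "degree g \<le> p * N - 1" by (rule degree_le) (use A(3) coeff_g in auto)
    moreover have "p * N > 0" using \<open>p > 1\<close> \<open>N > 0\<close> by simp
    ultimately show ?thesis by linarith
  qed
  have "geom_poly p N dvd g"
  proof (rule irreducible_dvd_if_common_root[OF of_rat_hom.field_hom_axioms])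
    show "irreducible (geom_poly p N :: rat poly)" unfolding N by (rule irreducible_geom_poly_prime_power[OF p])
    show "poly (map_poly of_rat (geom_poly p N)) z = 0"
      using poly_geom_poly_eq_0[OF z] by (simp add: map_poly_geom_poly of_rat_hom.comm_ring_hom_axioms)
    show "poly (map_poly of_rat g) z = 0"
      using sum by (simp add: g_def hom_distribs poly_sum poly_monom)
  qed
  then have periodic: "coeff g (k - N) = coeff g k" if "N \<le> k" "k < p * N" for k
    using coeff_periodic_if_geom_poly_dvd \<open>degree g < p * N\<close> \<open>N > 0\<close> that by blast
  obtain a where "a \<in> A" using A(2) by blast
  show False
  proof (cases "N \<le> a")
    case True
    then have "a - N \<in> A" using periodic[of a] coeff_g \<open>a \<in> A\<close> A(3) by (auto split: if_splits)
    moreover have "(a - N) mod N = a mod N" using True by (simp add: le_mod_geq)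
    ultimately have "a - N = a" using inj_onD[OF residues] \<open>a \<in> A\<close> by blast
    then show False using True \<open>N > 0\<close> by simp
  next
    case False
    have "2 * N \<le> p * N" using \<open>p > 1\<close> by simp
    then have "a + N < p * N" using False by linarith
    then have "a + N \<in> A" using periodic[of "a + N"] coeff_g \<open>a \<in> A\<close> by (auto split: if_splits)
    moreover have "(a + N) mod N = a mod N" by simp
    ultimately have "a + N = a" using inj_onD[OF residues] \<open>a \<in> A\<close> by blast
    then show False using \<open>N > 0\<close> by simp
  qed
qed

section \<open>\<open>p\<close>-adic integers\<close>

lemma Zp_0:
  assumes "x \<in> Zp p"
  shows "x 0 = 0"
proof -
  have "0 \<le> x 0" and "x 0 < 1" using assms by (auto simp: Zp_def dest: spec[of _ 0])
  then show ?thesis by simp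
qed

lemma Zp_mod_power:
  assumes "x \<in> Zp p" and "n \<le> m"
  shows "x m mod int p ^ n = x n"
  using assms(2)
proof (induction m)
  case 0
  then show ?case using Zp_0[OF assms(1)] by simp
next
  case (Suc m)
  have x: "0 \<le> x k" "x k < int p ^ k" "x (Suc k) mod int p ^ k = x k" for k
    using assms(1) by (auto simp: Zp_def)
  show ?case
  proof (cases "n = Suc m")
    case True
    then show ?thesis using x[of "Suc m"] by simp
  next
    case False
    then have "n \<le> m" using Suc.prems by simp
    then have "int p ^ n dvd int p ^ m" by (rule le_imp_power_dvd)
    then have "x (Suc m) mod int p ^ n = x (Suc m) mod int p ^ m mod int p ^ n"
      by (simp add: mod_mod_cancel)
    then show ?thesis using x(3)[of m] Suc.IH \<open>n \<le> m\<close> by simp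
  qed
qed

lemma Zp_level_eq_if_dvd:
  assumes "x \<in> Zp p" "y \<in> Zp p" "n \<le> m" "int p ^ n dvd x m - y m"
  shows "x n = y n"
  using Zp_mod_power[OF assms(1,3)] Zp_mod_power[OF assms(2,3)] assms(4)
  by (metis mod_eq_dvd_iff)

lemma zp_diff_eq_0_iff:
  assumes "x \<in> Zp p" "y \<in> Zp p"
  shows "zp_diff p x y n = 0 \<longleftrightarrow> x n = y n"
proof
  assume "zp_diff p x y n = 0"
  then have "int p ^ n dvd x n - y n" by (simp add: zp_diff_def dvd_eq_mod_eq_0)
  then show "x n = y n" using Zp_level_eq_if_dvd[OF assms] by blast
qed (simp add: zp_diff_def)

lemma zp_val_LeastI:
  assumes "x (Suc n) \<noteq> 0"
  shows "x (Suc (zp_val p x)) \<noteq> 0"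
  using LeastI[of "\<lambda>i. x (Suc i) \<noteq> 0" n] assms unfolding zp_val_def by auto

lemma Zp_nonzero_level:
  assumes "x \<in> Zp p" and "x \<noteq> (\<lambda>_. 0)"
  obtains n where "x (Suc n) \<noteq> 0"
proof -
  obtain m where "x m \<noteq> 0" using assms(2) by auto
  then show ?thesis using that Zp_0[OF assms(1)] by (cases m) auto
qed

lemma Zp_zp_val_eq_0:
  assumes "x \<in> Zp p" and "x \<noteq> (\<lambda>_. 0)"
  shows "x (zp_val p x) = 0"
proof (cases "zp_val p x")
  case (Suc i)
  then have "i < zp_val p x" by simp
  then show ?thesis unfolding zp_val_def using Suc not_less_Least by (fastforce simp: zp_val_def)
qed (use Zp_0[OF assms(1)] in simp)

lemma Zp_valuation_factor:
  assumes "w \<in> Zp p" and "w \<noteq> (\<lambda>_. 0)" and "zp_val p w < k"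
  obtains u where "w k = int p ^ zp_val p w * u" and "\<not> int p dvd u"
proof -
  define v where "v = zp_val p w"
  obtain n where "w (Suc n) \<noteq> 0" using Zp_nonzero_level[OF assms(1,2)] .
  then have "w (Suc v) \<noteq> 0" unfolding v_def by (rule zp_val_LeastI)
  have "w k mod int p ^ v = 0"
    using Zp_mod_power[OF assms(1), of v k] Zp_zp_val_eq_0[OF assms(1,2)] assms(3)
    unfolding v_def by simp
  then obtain u where u: "w k = int p ^ v * u" by (auto elim: dvdE simp: dvd_eq_mod_eq_0)
  have "\<not> int p dvd u"
  proof
    assume "int p dvd u"
    then have "w k mod int p ^ Suc v = 0" unfolding u by (simp add: mult_dvd_mono dvd_eq_mod_eq_0[symmetric])
    then show False
      using Zp_mod_power[OF assms(1), of "Suc v" k] \<open>w (Suc v) \<noteq> 0\<close> assms(3) unfolding v_def by simp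
  qed
  with u show ?thesis using that unfolding v_def by blast
qed

lemma Zp_level_eq_if_mult_mod_eq:
  assumes "prime p" and "x \<in> Zp p" and "y \<in> Zp p" and "\<not> int p dvd u" and "n + v \<le> m"
    and "(x m * (int p ^ v * u)) mod int p ^ (n + v) = (y m * (int p ^ v * u)) mod int p ^ (n + v)"
  shows "x n = y n"
proof -
  have "int p ^ (n + v) dvd x m * (int p ^ v * u) - y m * (int p ^ v * u)"
    using assms(6) by (simp only: mod_eq_dvd_iff)
  also have "int p ^ (n + v) = int p ^ v * int p ^ n"
    by (simp add: power_add)
  also have "x m * (int p ^ v * u) - y m * (int p ^ v * u) = int p ^ v * (u * (x m - y m))"
    by (simp add: algebra_simps)
  finally have "int p ^ v * int p ^ n dvd int p ^ v * (u * (x m - y m))" .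
  moreover have "int p ^ v \<noteq> 0" using assms(1) prime_gt_0_nat by simp
  ultimately have "int p ^ n dvd u * (x m - y m)"
    using dvd_times_left_cancel_iff[of "int p ^ v" "int p ^ n" "u * (x m - y m)"] by blast
  moreover have "prime_elem (int p)" using assms(1) by simp
  ultimately have "int p ^ n dvd x m - y m"
    using prime_power_dvd_multD[of "int p" n u "x m - y m"] assms(4) by (cases "n = 0") simp_all
  then show ?thesis using assms(5) by (intro Zp_level_eq_if_dvd[OF assms(2,3)]) simp_all
qed

lemma gammaT_level_separates:
  assumes "finite T" and "T \<subseteq> Zp p" and "t \<in> T" "t' \<in> T" "t \<noteq> t'" and "gammaT p T < n"
  shows "t n \<noteq> t' n"
proof
  assume eq: "t n = t' n"
  have Zp: "t \<in> Zp p" "t' \<in> Zp p" using assms(2-4) by auto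
  define d where "d = zp_diff p t t'"
  obtain m where "t m \<noteq> t' m" using assms(5) by auto
  then have "d m \<noteq> 0" using zp_diff_eq_0_iff[OF Zp] unfolding d_def by blast
  moreover have "d 0 = 0" using zp_diff_eq_0_iff[OF Zp] Zp_0[OF Zp(1)] Zp_0[OF Zp(2)] unfolding d_def by simp
  ultimately obtain i where "d (Suc i) \<noteq> 0" by (cases m) auto
  then have "d (Suc (zp_val p d)) \<noteq> 0" by (rule zp_val_LeastI)
  then have neq: "t (Suc (zp_val p d)) \<noteq> t' (Suc (zp_val p d))"
    using zp_diff_eq_0_iff[OF Zp] unfolding d_def by blast
  have "finite ((\<lambda>(s, s'). zp_val p (zp_diff p s s')) ` (T \<times> T))" using assms(1) by simp
  then have "finite {zp_val p (zp_diff p s s') | s s'. s \<in> T \<and> s' \<in> T \<and> s \<noteq> s'}"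
    by (rule finite_subset[rotated]) auto
  then have "zp_val p d \<le> gammaT p T"
    unfolding gammaT_def d_def by (rule Max_ge) (use assms(3-5) in blast)
  then have "Suc (zp_val p d) \<le> n" using assms(6) by simp
  then have "t (Suc (zp_val p d)) = t' (Suc (zp_val p d))"
    using eq Zp_mod_power[OF Zp(1)] Zp_mod_power[OF Zp(2)] by metis
  then show False using neq by contradiction
qed

lemma nat_mod_power_mod_power:
  assumes "p > 0" and "n \<le> k"
  shows "nat (x mod int p ^ k) mod p ^ n = nat (x mod int p ^ n)"
proof -
  have "int p ^ n dvd int p ^ k" using assms(2) by (rule le_imp_power_dvd)
  then have "x mod int p ^ k mod int p ^ n = x mod int p ^ n" by (rule mod_mod_cancel)
  moreover have "nat (x mod int p ^ k) mod p ^ n = nat (x mod int p ^ k mod int p ^ n)"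
    using assms(1) by (simp add: nat_mod_distrib nat_power_eq)
  ultimately show ?thesis by simp
qed

lemma scaled_residues_inj:
  assumes "prime p" and "finite T" and "T \<subseteq> Zp p"
    and "w k = int p ^ v * u" and "\<not> int p dvd u" and "v + gammaT p T + 2 \<le> k"
  shows "inj_on (\<lambda>t. nat ((t k * w k) mod int p ^ k) mod p ^ (k - 1)) T"
proof (rule inj_onI, rule ccontr)
  fix t t' assume tT: "t \<in> T" "t' \<in> T" and "t \<noteq> t'"
    and "nat ((t k * w k) mod int p ^ k) mod p ^ (k - 1) = nat ((t' k * w k) mod int p ^ k) mod p ^ (k - 1)"
  then have "(t k * w k) mod int p ^ (k - 1) = (t' k * w k) mod int p ^ (k - 1)"
    using assms(1) prime_gt_0_nat by (simp add: nat_mod_power_mod_power eq_nat_nat_iff)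
  define n where "n = k - 1 - v"
  have "n + v = k - 1" "n + v \<le> k" "gammaT p T < n" using assms(6) unfolding n_def by auto
  then have "t n = t' n"
    using Zp_level_eq_if_mult_mod_eq[OF assms(1), of t t' u n v k] assms(3-5) tT
      \<open>(t k * w k) mod int p ^ (k - 1) = _\<close> by auto
  then show False using gammaT_level_separates[OF assms(2,3) tT \<open>t \<noteq> t'\<close> \<open>gammaT p T < n\<close>] by contradiction
qed

section \<open>The Fourier transform of \<open>\<mu>\<^sub>T\<close>\<close>

lemma root_unity_power_eq_1_iff:
  assumes "n > 0"
  shows "exp (2 * of_real pi * \<i> / of_nat n) ^ j = 1 \<longleftrightarrow> n dvd j"
proof -
  have "exp (2 * of_real pi * \<i> / of_nat n) ^ j = exp (2 * of_real pi * \<i> * of_nat j / of_nat n)"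
    by (simp flip: exp_of_nat_mult add: field_simps)
  then show ?thesis using complex_root_unity_eq_1[of n j] assms by simp
qed

lemma sum_root_unity_prime_power_nonzero:
  assumes "prime p" and "k > 0" and "finite A" and "A \<noteq> {}" and "A \<subseteq> {..<p ^ k}"
    and "inj_on (\<lambda>a. a mod p ^ (k - 1)) A"
  shows "(\<Sum>a\<in>A. exp (2 * of_real pi * \<i> / of_nat (p ^ k)) ^ a) \<noteq> 0"
proof (rule sum_powers_prime_power_root_nonzero[OF assms(1) refl])
  have "p > 1" using assms(1) prime_gt_1_nat by blast
  have pk: "p * p ^ (k - 1) = p ^ k" using assms(2) by (cases k) auto
  then show "A \<subseteq> {..<p * p ^ (k - 1)}" using assms(5) by simp
  have "0 < p ^ (k - 1)" "p ^ (k - 1) < p ^ k" using \<open>p > 1\<close> assms(2) by auto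
  then have "\<not> p ^ k dvd p ^ (k - 1)" by (auto dest: dvd_imp_le)
  then show "exp (2 * of_real pi * \<i> / of_nat (p ^ k)) ^ (p * p ^ (k - 1)) = 1"
    and "exp (2 * of_real pi * \<i> / of_nat (p ^ k)) ^ p ^ (k - 1) \<noteq> (1::complex)"
    using root_unity_power_eq_1_iff[of "p ^ k"] \<open>p > 1\<close> unfolding pk by auto
qed (use assms in auto)

lemma padic_chi_zp_qp_mult:
  assumes "p > 0"
  shows "padic_chi p (zp_qp_mult p t (k, w))
    = exp (2 * of_real pi * \<i> / of_nat (p ^ k)) ^ nat ((t k * w k) mod int p ^ k)"
proof -
  have "qp_frac p (zp_qp_mult p t (k, w)) = real (nat ((t k * w k) mod int p ^ k)) / real (p ^ k)"
    using assms by (simp add: zp_qp_mult_def qp_frac_def zp_mult_def)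
  then show ?thesis
    by (simp add: padic_chi_def flip: exp_of_nat_mult add: field_simps)
qed

lemma qp_abs_gt_powr_imp:
  assumes "p > 1" and "qp_abs p (k, w) > real p powr (real g + 1)"
  shows "w \<noteq> (\<lambda>_. 0)" and "zp_val p w + g + 2 \<le> k"
proof -
  show "w \<noteq> (\<lambda>_. 0)" using assms by (auto simp: qp_abs_def)
  then have "real p powr (real g + 1) < real p powr (real k - real (zp_val p w))"
    using assms(2) by (simp add: qp_abs_def)
  then show "zp_val p w + g + 2 \<le> k" using assms(1) by (simp add: powr_less_cancel_iff)
qed

theorem lemma2p5:
  fixes p :: nat and T :: "(nat \<Rightarrow> int) set" and \<xi> :: "nat \<times> (nat \<Rightarrow> int)"
  assumes "prime p"
    and "finite T" and "T \<subseteq> Zp p" and "card T \<ge> 2"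
    and "\<xi> \<in> Qp p"
    and "qp_abs p \<xi> > real p powr (real (gammaT p T) + 1)"
  shows "fourier_muT p T \<xi> \<noteq> 0"
proof -
  obtain k w where \<xi>: "\<xi> = (k, w)" by (cases \<xi>)
  have p1: "p > 1" using assms(1) prime_gt_1_nat by blast
  have w: "w \<in> Zp p" using assms(5) by (simp add: \<xi> Qp_def)
  have w0: "w \<noteq> (\<lambda>_. 0)" and k: "zp_val p w + gammaT p T + 2 \<le> k"
    using qp_abs_gt_powr_imp[OF p1] assms(6) by (simp_all add: \<xi>)
  have "zp_val p w < k" using k by simp
  then obtain u where u: "w k = int p ^ zp_val p w * u" "\<not> int p dvd u"
    by (rule Zp_valuation_factor[OF w w0])
  define a where "a t = nat ((t k * w k) mod int p ^ k)" for t
  define z :: complex where "z = exp (2 * of_real pi * \<i> / of_nat (p ^ k))"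
  have inj: "inj_on (\<lambda>t. a t mod p ^ (k - 1)) T"
    unfolding a_def by (rule scaled_residues_inj[where w = w and k = k, OF assms(1-3) u k])
  then have "inj_on a T" by (auto simp: inj_on_def)
  have "fourier_muT p T \<xi> = cnj (\<Sum>t\<in>T. z ^ a t)"
    using p1 by (simp add: fourier_muT_def \<xi> padic_chi_zp_qp_mult z_def a_def)
  also have "(\<Sum>t\<in>T. z ^ a t) = (\<Sum>b\<in>a ` T. z ^ b)"
    using \<open>inj_on a T\<close> by (simp add: sum.reindex)
  finally have "fourier_muT p T \<xi> = cnj (\<Sum>b\<in>a ` T. z ^ b)" .
  moreover have "(\<Sum>b\<in>a ` T. z ^ b) \<noteq> 0" unfolding z_def
  proof (rule sum_root_unity_prime_power_nonzero[OF assms(1)])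
    show "k > 0" "finite (a ` T)" "a ` T \<noteq> {}" using k assms(2,4) by auto
    show "a ` T \<subseteq> {..<p ^ k}" using p1 by (auto simp: a_def nat_less_iff)
    show "inj_on (\<lambda>b. b mod p ^ (k - 1)) (a ` T)" using inj by (auto simp: inj_on_def)
  qed
  ultimately show ?thesis by (simp only: complex_cnj_zero_iff not_False_eq_True)
qed

end
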